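(* Let $\mathcal{S}$ be a relational structure admitting an injective unary FA-presentation $(a^*,\phi)$, and let $R$ be a binary relation in the signature of $\mathcal{S}$. Let $R^+$ denote the transitive closure of $R$. Then $\Lambda(R^+,\phi)=\{(u,v)\in a^*\times a^* : (u\phi,v\phi)\in R^+\}$ is regular. Hence $\mathcal{S}$ augmented by the relation $R^+$ is also unary FA-presentable.
   Context: For words $w_1,\dots,w_r$ over a finite alphabet $A$, $\mathrm{conv}(w_1,\dots,w_r)$ is the word over $(A\cup\{\$\})^r$ (with $\$\notin A$) whose $j$-th letter is the tuple of $j$-th letters of the $w_i$, shorter words being padded at the end with $\$$. A relation $X\subseteq (A^* )^r$ is regular if $\{\mathrm{conv}(w_1,\dots,w_r):(w_1,\dots,w_r)\in X\}$ is a regular language. An FA-presentation of a relational structure $\mathcal{S}=(S,R_1,\dots,R_n)$ is a pair $(L,\phi)$ with $L$ a regular language over a finite alphabet and $\phi:L\to S$ surjective such that for every relation $R\in\{=,R_1,\dots,R_n\}$ of arity $r$ the relation $\Lambda(R,\phi)=\{(w_1,\dots,w_r)\in L^r : R(w_1\phi,\dots,w_r\phi)\}$ is regular. It is unary if $L$ is over a one-letter alphabet $\{a\}$; a structure is unary FA-presentable if it admits a unary FA-presentation. An injective unary FA-presentation $(a^*,\phi)$ is one with $L=a^*$ and $\phi$ injective. *)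

theory Defs
  imports Main
begin

(* Since the letter type may be larger than the intended finite alphabet,
   totality is harmless: restricting to / extending from a finite alphabet
   (with a sink state) gives the usual notion for languages over that alphabet. *)
definition regular :: "'s list set \<Rightarrow> bool" where
  "regular L \<longleftrightarrow>
     (\<exists>(Q::nat set) (q0::nat) (\<delta>::nat \<Rightarrow> 's \<Rightarrow> nat) (F::nat set).
        finite Q \<and> q0 \<in> Q \<and> (\<forall>q\<in>Q. \<forall>x. \<delta> q x \<in> Q) \<and> F \<subseteq> Q \<and>
        L = {w. foldl \<delta> q0 w \<in> F})"

(* Convolution of a tuple (list) of words; None plays the role of the padding symbol $. *)
definition conv :: "'a list list \<Rightarrow> 'a option list list" where
  "conv ws = map (\<lambda>j. map (\<lambda>w. if j < length w then Some (w ! j) else None) ws)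
                 [0..<foldr (\<lambda>w m. max (length w) m) ws 0]"

definition regular_rel :: "'a list list set \<Rightarrow> bool" where
  "regular_rel X \<longleftrightarrow> regular (conv ` X)"

(* Lambda(R, phi): r-tuples of words in L whose images satisfy R
   (an r-ary relation on the structure is a set of lists of length r). *)
definition Lambda :: "'c list set \<Rightarrow> ('c list \<Rightarrow> 'b) \<Rightarrow> nat \<Rightarrow> 'b list set \<Rightarrow> 'c list list set" where
  "Lambda L \<phi> r R = {ws. length ws = r \<and> set ws \<subseteq> L \<and> map \<phi> ws \<in> R}"

definition eq_rel :: "'b list set" where
  "eq_rel = {[x, y] | x y. x = y}"

definition rel_structure :: "'b set \<Rightarrow> (nat \<times> 'b list set) list \<Rightarrow> bool" where
  "rel_structure S Rs \<longleftrightarrow>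
     (\<forall>(r, R) \<in> set Rs. R \<subseteq> {xs. length xs = r \<and> set xs \<subseteq> S})"

definition fa_presentation ::
  "'b set \<Rightarrow> (nat \<times> 'b list set) list \<Rightarrow> 'c list set \<Rightarrow> ('c list \<Rightarrow> 'b) \<Rightarrow> bool" where
  "fa_presentation S Rs L \<phi> \<longleftrightarrow>
     (\<exists>\<Sigma>. finite \<Sigma> \<and> L \<subseteq> lists \<Sigma>) \<and> regular L \<and> \<phi> ` L = S \<and>
     regular_rel (Lambda L \<phi> 2 eq_rel) \<and>
     (\<forall>(r, R) \<in> set Rs. regular_rel (Lambda L \<phi> r R))"

(* Unary: words over the one-letter alphabet, modelled as the type unit list. *)
definition unary_fa_presentable :: "'b set \<Rightarrow> (nat \<times> 'b list set) list \<Rightarrow> bool" where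
  "unary_fa_presentable S Rs \<longleftrightarrow>
     (\<exists>(L::unit list set) \<phi>. fa_presentation S Rs L \<phi>)"

definition injective_unary_fa_presentation ::
  "'b set \<Rightarrow> (nat \<times> 'b list set) list \<Rightarrow> (unit list \<Rightarrow> 'b) \<Rightarrow> bool" where
  "injective_unary_fa_presentation S Rs \<phi> \<longleftrightarrow>
     fa_presentation S Rs (UNIV :: unit list set) \<phi> \<and> inj \<phi>"

definition trancl_rel :: "'b list set \<Rightarrow> 'b list set" where
  "trancl_rel R = {[x, y] | x y. (x, y) \<in> {(u, v). [u, v] \<in> R}\<^sup>+}"

end

theory Submission
  imports Defs "HOL-Library.FuncSet"
begin

(* Through convolution, a binary relation on a^* is a relation E on the naturals, and its
   convolution language is regular iff E is ultimately periodic: beyond a threshold T,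
   membership is invariant under adding a period P to both coordinates, and, far from the
   diagonal, under adding P to the far coordinate. (A finite automaton reading a^n is
   eventually periodic in n; conversely, counting modulo P above T suffices.)

   Ultimate periodicity survives transitive closure. A path from x to a far-away y can be
   pumped by a bounded period: take P + 1 levels spaced T apart and the last point of the path
   below each level. Either the step leaving it is long and can be stretched by multiples of P,
   or all these points lie within T below their levels, two of them are congruent modulo P,
   and the path between them is a loop above T that can be repeated. This gives one-way
   pumping implications, which become equivalences beyond some threshold because a Boolean
   function on pairs of naturals that is monotone in both arguments is eventually constant
   along rows and columns. Finally, pulling R back along phi commutes with transitive closure. *)

lemma regularI:
  fixes \<delta> :: "'q \<Rightarrow> 's \<Rightarrow> 'q"
  assumes fin: "finite Q" and q0: "q0 \<in> Q" and closed: "\<And>q x. q \<in> Q \<Longrightarrow> \<delta> q x \<in> Q"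
  shows "regular {w. foldl \<delta> q0 w \<in> F}"
proof -
  obtain enc :: "'q \<Rightarrow> nat" and n where enc: "enc ` Q = {i. i < n}" "inj_on enc Q"
    using finite_imp_inj_to_nat_seg[OF fin] by blast
  define dec where "dec = the_inv_into Q enc"
  have dec: "\<And>q. q \<in> Q \<Longrightarrow> dec (enc q) = q"
    unfolding dec_def using enc(2) by (simp add: the_inv_into_f_f)
  define \<delta>' where "\<delta>' i x = enc (\<delta> (dec i) x)" for i x
  have run: "q \<in> Q \<Longrightarrow> foldl \<delta>' (enc q) w = enc (foldl \<delta> q w) \<and> foldl \<delta> q w \<in> Q" for q w
  proof (induction w arbitrary: q)
    case Nil then show ?case by simp
  next
    case (Cons x w)
    then show ?case using closed dec by (simp add: \<delta>'_def)
  qed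
  have lang: "{w. foldl \<delta> q0 w \<in> F} = {w. foldl \<delta>' (enc q0) w \<in> enc ` (F \<inter> Q)}"
    using run[OF q0] enc(2) by (auto simp: inj_on_image_mem_iff)
  have "\<forall>q\<in>enc ` Q. \<forall>x. \<delta>' q x \<in> enc ` Q"
    using closed dec by (auto simp: \<delta>'_def)
  then show ?thesis
    unfolding regular_def lang
    by (intro exI[of _ "enc ` Q"] exI[of _ "enc q0"] exI[of _ \<delta>'] exI[of _ "enc ` (F \<inter> Q)"])
      (use fin q0 in auto)
qed

lemma funpow_eventually_periodic:
  assumes fin: "finite Q" and closed: "\<And>q. q \<in> Q \<Longrightarrow> f q \<in> Q"
  shows "\<exists>t p. 0 < p \<and> (\<forall>n\<ge>t. \<forall>c. \<forall>q\<in>Q. (f^^(n + c * p)) q = (f^^n) q)"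
proof -
  have inQ: "q \<in> Q \<Longrightarrow> (f^^n) q \<in> Q" for n q
    by (induction n) (simp_all add: closed)
  define g where "g n = (\<lambda>q\<in>Q. (f^^n) q)" for n
  have "range g \<subseteq> Q \<rightarrow>\<^sub>E Q"
    using inQ by (auto simp: g_def)
  then have "finite (range g)"
    using finite_PiE[OF fin, of "\<lambda>_. Q"] fin by (blast intro: finite_subset)
  then have "\<not> inj g"
    using finite_imageD infinite_UNIV_nat by blast
  then obtain i j where "i < j" and gij: "g i = g j"
    unfolding inj_def by (metis nat_neq_iff)
  define p where "p = j - i"
  have ij: "(f^^i) q = (f^^(i + p)) q" if "q \<in> Q" for q
    using fun_cong[OF gij, of q] that \<open>i < j\<close> by (simp add: g_def p_def)
  have period: "(f^^(n + p)) q = (f^^n) q" if "i \<le> n" "q \<in> Q" for n q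
  proof -
    have "(f^^(n + p)) q = (f^^(n - i)) ((f^^(i + p)) q)"
      using that by (simp flip: funpow_add comp_apply[of "f^^(n - i)"])
    also have "\<dots> = (f^^(n - i)) ((f^^i) q)"
      using ij that by simp
    also have "\<dots> = (f^^n) q"
      using that by (simp flip: funpow_add comp_apply[of "f^^(n - i)"])
    finally show ?thesis .
  qed
  have "(f^^(n + c * p)) q = (f^^n) q" if "i \<le> n" "q \<in> Q" for n c q
  proof (induction c)
    case (Suc c)
    have "(f^^(n + Suc c * p)) q = (f^^((n + c * p) + p)) q"
      by (simp add: algebra_simps)
    also have "\<dots> = (f^^(n + c * p)) q"
      using period that by simp
    finally show ?case
      using Suc.IH by simp
  qed simp
  then show ?thesis
    using \<open>i < j\<close> by (intro exI[of _ i] exI[of _ p]) (auto simp: p_def)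
qed

lemma regular_append_replicate_periodic:
  assumes "regular L"
  shows "\<exists>t p. 0 < p \<and> (\<forall>k\<ge>t. \<forall>c u v.
           u @ replicate (k + c * p) l @ v \<in> L \<longleftrightarrow> u @ replicate k l @ v \<in> L)"
proof -
  obtain Q q0 \<delta> F where fin: "finite (Q::nat set)" and q0: "q0 \<in> Q"
    and closed: "\<forall>q\<in>Q. \<forall>x. \<delta> q x \<in> Q" and L: "L = {w. foldl \<delta> q0 w \<in> F}"
    using assms unfolding regular_def by blast
  define f where "f q = \<delta> q l" for q
  obtain t p where "0 < p" and per: "\<forall>n\<ge>t. \<forall>c. \<forall>q\<in>Q. (f^^(n + c * p)) q = (f^^n) q"
    using funpow_eventually_periodic[OF fin, of f] closed by (auto simp: f_def)
  have run_closed: "foldl \<delta> q u \<in> Q" if "q \<in> Q" for q u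
    using that closed by (induction u arbitrary: q) auto
  have "foldl \<delta> q0 (u @ replicate k l @ v) = foldl \<delta> ((f^^k) (foldl \<delta> q0 u)) v" for u k v
    by (simp add: foldl_conv_fold f_def[abs_def])
  then show ?thesis
    using \<open>0 < p\<close> per run_closed[OF q0] unfolding L by (intro exI[of _ t] exI[of _ p]) auto
qed

definition letter_both :: "unit option list" where
  "letter_both = [Some (), Some ()]"

definition letter_fst :: "unit option list" where
  "letter_fst = [Some (), None]"

definition letter_snd :: "unit option list" where
  "letter_snd = [None, Some ()]"

definition conv_unary :: "nat \<Rightarrow> nat \<Rightarrow> unit option list list" where
  "conv_unary m n = conv [replicate m (), replicate n ()]"

lemma conv_unary_eq:
  "conv_unary m n =
     (if m \<le> n then replicate m letter_both @ replicate (n - m) letter_snd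
      else replicate n letter_both @ replicate (m - n) letter_fst)"
  by (rule nth_equalityI)
    (auto simp: conv_unary_def conv_def nth_append letter_both_def letter_fst_def letter_snd_def)

lemma conv_unary_inject: "conv_unary m n = conv_unary m' n' \<longleftrightarrow> m = m' \<and> n = n'"
proof -
  have "length (filter (\<lambda>l. l \<noteq> letter_snd) (conv_unary m n)) = m"
    "length (filter (\<lambda>l. l \<noteq> letter_fst) (conv_unary m n)) = n" for m n
    by (simp_all add: conv_unary_eq filter_replicate letter_both_def letter_fst_def letter_snd_def)
  then show ?thesis
    by metis
qed

definition conv_unary_lang :: "(nat \<times> nat) set \<Rightarrow> unit option list list set" where
  "conv_unary_lang E = (\<lambda>(m, n). conv_unary m n) ` E"

lemma conv_unary_in_lang_iff [simp]: "conv_unary m n \<in> conv_unary_lang E \<longleftrightarrow> (m, n) \<in> E"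
  by (auto simp: conv_unary_lang_def conv_unary_inject)

definition unary_pullback :: "(unit list \<Rightarrow> 'b) \<Rightarrow> 'b list set \<Rightarrow> (nat \<times> nat) set" where
  "unary_pullback \<phi> R = {(m, n). [\<phi> (replicate m ()), \<phi> (replicate n ())] \<in> R}"

lemma unit_list_eq_replicate: "(u :: unit list) = replicate (length u) ()"
  by (induction u) auto

lemma conv_Lambda_unary:
  "conv ` Lambda (UNIV :: unit list set) \<phi> 2 R = conv_unary_lang (unary_pullback \<phi> R)"
proof (intro equalityI subsetI)
  fix w assume "w \<in> conv ` Lambda UNIV \<phi> 2 R"
  then obtain u v where "w = conv [u, v]" "[\<phi> u, \<phi> v] \<in> R"
    by (auto simp: Lambda_def numeral_2_eq_2 length_Suc_conv)
  then have "w = conv_unary (length u) (length v)" "(length u, length v) \<in> unary_pullback \<phi> R"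
    by (simp_all add: conv_unary_def unary_pullback_def flip: unit_list_eq_replicate)
  then show "w \<in> conv_unary_lang (unary_pullback \<phi> R)"
    by simp
next
  fix w assume "w \<in> conv_unary_lang (unary_pullback \<phi> R)"
  then obtain m n where "w = conv [replicate m (), replicate n ()]" "(m, n) \<in> unary_pullback \<phi> R"
    by (auto simp: conv_unary_lang_def conv_unary_def)
  then show "w \<in> conv ` Lambda UNIV \<phi> 2 R"
    by (auto simp: Lambda_def unary_pullback_def)
qed

definition ult_periodic :: "nat \<Rightarrow> nat \<Rightarrow> (nat \<times> nat) set \<Rightarrow> bool" where
  "ult_periodic T P E \<longleftrightarrow> 0 < P \<and>
     (\<forall>x y. T \<le> x \<longrightarrow> T \<le> y \<longrightarrow> ((x, y) \<in> E \<longleftrightarrow> (x + P, y + P) \<in> E)) \<and>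
     (\<forall>x y. x + T \<le> y \<longrightarrow> ((x, y) \<in> E \<longleftrightarrow> (x, y + P) \<in> E)) \<and>
     (\<forall>x y. y + T \<le> x \<longrightarrow> ((x, y) \<in> E \<longleftrightarrow> (x + P, y) \<in> E))"

lemma regular_imp_ult_periodic:
  assumes "regular (conv_unary_lang E)"
  shows "\<exists>T P. ult_periodic T P E"
proof -
  let ?L = "conv_unary_lang E"
  have "\<exists>t p. 0 < p \<and> (\<forall>k\<ge>t. \<forall>c u v.
          u @ replicate (k + c * p) l @ v \<in> ?L \<longleftrightarrow> u @ replicate k l @ v \<in> ?L)" for l
    by (rule regular_append_replicate_periodic[OF assms])
  then obtain t p where p: "\<And>l. 0 < p l"
    and per: "\<And>l k c u v. t l \<le> k \<Longrightarrow>
                u @ replicate (k + c * p l) l @ v \<in> ?L \<longleftrightarrow> u @ replicate k l @ v \<in> ?L"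
    by metis
  define T where "T = max (t letter_both) (max (t letter_fst) (t letter_snd))"
  define P where "P = p letter_both * p letter_fst * p letter_snd"
  have "0 < P"
    using p by (simp add: P_def)
  have shift: "u @ replicate (k + P) l @ v \<in> ?L \<longleftrightarrow> u @ replicate k l @ v \<in> ?L"
    if "l \<in> {letter_both, letter_fst, letter_snd}" "T \<le> k" for l k u v
  proof -
    have "p l dvd P"
      using that(1) by (auto simp: P_def)
    then obtain c where "P = c * p l"
      by (auto simp: dvd_def mult.commute)
    then show ?thesis
      using per[of l k] that by (auto simp: T_def)
  qed
  have "ult_periodic T P E"
    unfolding ult_periodic_def
  proof (intro conjI allI impI)
    fix x y assume "T \<le> x" "T \<le> y"
    then show "(x, y) \<in> E \<longleftrightarrow> (x + P, y + P) \<in> E"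
      using shift[of letter_both x "[]" "replicate (y - x) letter_snd"]
        shift[of letter_both y "[]" "replicate (x - y) letter_fst"]
      by (simp flip: conv_unary_in_lang_iff add: conv_unary_eq)
  next
    fix x y assume "x + T \<le> y"
    then show "(x, y) \<in> E \<longleftrightarrow> (x, y + P) \<in> E"
      using shift[of letter_snd "y - x" "replicate x letter_both" "[]"]
      by (simp flip: conv_unary_in_lang_iff add: conv_unary_eq)
  next
    fix x y assume "y + T \<le> x"
    then show "(x, y) \<in> E \<longleftrightarrow> (x + P, y) \<in> E"
      using shift[of letter_fst "x - y" "replicate y letter_both" "[]"] \<open>0 < P\<close>
      by (cases "x = y") (simp_all flip: conv_unary_in_lang_iff add: conv_unary_eq)
  qed (rule \<open>0 < P\<close>)
  then show ?thesis
    by blast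
qed

lemma ult_periodic_shift_diag:
  assumes "ult_periodic T P E" "T \<le> x" "T \<le> y"
  shows "(x + c * P, y + c * P) \<in> E \<longleftrightarrow> (x, y) \<in> E"
proof (induction c)
  case (Suc c)
  have "(x + c * P, y + c * P) \<in> E \<longleftrightarrow> (x + c * P + P, y + c * P + P) \<in> E"
    using assms unfolding ult_periodic_def by (metis trans_le_add1)
  with Suc.IH show ?case by (simp add: add_ac)
qed simp

lemma ult_periodic_shift_right:
  assumes "ult_periodic T P E" "x + T \<le> y"
  shows "(x, y + c * P) \<in> E \<longleftrightarrow> (x, y) \<in> E"
proof (induction c)
  case (Suc c)
  have "(x, y + c * P) \<in> E \<longleftrightarrow> (x, y + c * P + P) \<in> E"
    using assms unfolding ult_periodic_def by (metis trans_le_add1)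
  with Suc.IH show ?case by (simp add: add_ac)
qed simp

lemma ult_periodic_shift_left:
  assumes "ult_periodic T P E" "y + T \<le> x"
  shows "(x + c * P, y) \<in> E \<longleftrightarrow> (x, y) \<in> E"
proof (induction c)
  case (Suc c)
  have "(x + c * P, y) \<in> E \<longleftrightarrow> (x + c * P + P, y) \<in> E"
    using assms unfolding ult_periodic_def by (metis trans_le_add1)
  with Suc.IH show ?case by (simp add: add_ac)
qed simp

definition canon :: "nat \<Rightarrow> nat \<Rightarrow> nat \<Rightarrow> nat" where
  "canon T P a = (if a < T then a else T + (a - T) mod P)"

definition canon_quot :: "nat \<Rightarrow> nat \<Rightarrow> nat \<Rightarrow> nat" where
  "canon_quot T P a = (if a < T then 0 else (a - T) div P)"

lemma canon_decomp: "canon T P a + canon_quot T P a * P = a"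
  by (simp add: canon_def canon_quot_def)

lemma canon_quot_eq_0_or_ge: "canon_quot T P a = 0 \<or> T \<le> canon T P a"
  by (simp add: canon_def canon_quot_def)

lemma canon_lt: "0 < P \<Longrightarrow> canon T P a < T + P"
  by (simp add: canon_def)

lemma canon_idem: "0 < P \<Longrightarrow> canon T P (canon T P a) = canon T P a"
  by (simp add: canon_def)

lemma canon_Suc: "0 < P \<Longrightarrow> canon T P (Suc (canon T P a)) = canon T P (Suc a)"
  by (auto simp: canon_def mod_Suc_eq Suc_diff_le)

lemma canon_0 [simp]: "canon T P 0 = 0"
  by (simp add: canon_def)

lemma canon_decomp_if:
  "canon T P a + (if T \<le> canon T P a then canon_quot T P a else 0) * P = a"
  using canon_decomp[of T P a] canon_quot_eq_0_or_ge[of T P a] by auto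

lemma canon_quot_ge:
  assumes "0 < P" "T + N * P \<le> a"
  shows "N \<le> canon_quot T P a"
proof -
  have "(N * P) div P \<le> (a - T) div P"
    using assms(2) by (intro div_le_mono) simp
  then show ?thesis
    using assms by (simp add: canon_quot_def)
qed

lemma canon_ge: "T \<le> a \<Longrightarrow> T \<le> canon T P a"
  by (simp add: canon_def)

lemma ult_periodic_canon_above:
  assumes "ult_periodic T P E"
  shows "(a, a + b) \<in> E \<longleftrightarrow> (canon T P a, canon T P a + canon T P b) \<in> E"
proof -
  let ?a = "canon T P a" and ?b = "canon T P b"
  have "(a, a + b) \<in> E \<longleftrightarrow> (?a, ?a + b) \<in> E"
    using ult_periodic_shift_diag[OF assms, of ?a "?a + b" "canon_quot T P a"]
      canon_decomp[of T P a] canon_quot_eq_0_or_ge[of T P a]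
    by (auto simp: add_ac)
  also have "\<dots> \<longleftrightarrow> (?a, ?a + ?b) \<in> E"
    using ult_periodic_shift_right[OF assms, of ?a "?a + ?b" "canon_quot T P b"]
      canon_decomp[of T P b] canon_quot_eq_0_or_ge[of T P b]
    by (auto simp: add_ac)
  finally show ?thesis .
qed

lemma ult_periodic_canon_below:
  assumes "ult_periodic T P E"
  shows "(a + b, a) \<in> E \<longleftrightarrow> (canon T P a + canon T P b, canon T P a) \<in> E"
proof -
  let ?a = "canon T P a" and ?b = "canon T P b"
  have "(a + b, a) \<in> E \<longleftrightarrow> (?a + b, ?a) \<in> E"
    using ult_periodic_shift_diag[OF assms, of "?a + b" ?a "canon_quot T P a"]
      canon_decomp[of T P a] canon_quot_eq_0_or_ge[of T P a]
    by (auto simp: add_ac)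
  also have "\<dots> \<longleftrightarrow> (?a + ?b, ?a) \<in> E"
  proof -
    have eq: "?a + b = ?a + ?b + canon_quot T P b * P"
      using canon_decomp[of T P b] by simp
    have "canon_quot T P b = 0 \<or> ?a + T \<le> ?a + ?b"
      using canon_quot_eq_0_or_ge[of T P b] by auto
    then show ?thesis
      unfolding eq
      using ult_periodic_shift_left[OF assms, where x = "?a + ?b" and y = ?a]
      by auto
  qed
  finally show ?thesis .
qed

lemma letters_distinct [simp]:
  "letter_both \<noteq> letter_fst" "letter_both \<noteq> letter_snd" "letter_fst \<noteq> letter_snd"
  "letter_fst \<noteq> letter_both" "letter_snd \<noteq> letter_both" "letter_snd \<noteq> letter_fst"
  by (simp_all add: letter_both_def letter_fst_def letter_snd_def)

text \<open>An automaton for the convolutions of pairs of unary words, with infinitely many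
  states (mode, a, b): mode 0 has read a letters \<open>letter_both\<close>, modes 1 and 2 have then
  read b > 0 letters \<open>letter_snd\<close> resp. \<open>letter_fst\<close>, and mode 3 is a rejecting sink.
  Reducing a and b with \<open>canon T P\<close> makes it finite, and for an ultimately periodic
  relation this does not change acceptance.\<close>

definition pair_step :: "nat \<times> nat \<times> nat \<Rightarrow> unit option list \<Rightarrow> nat \<times> nat \<times> nat" where
  "pair_step s l = (case s of (md, a, b) \<Rightarrow>
     if md = 0 then
       (if l = letter_both then (0, a + 1, 0) else if l = letter_snd then (1, a, 1)
        else if l = letter_fst then (2, a, 1) else (3, 0, 0))
     else if md = 1 \<and> l = letter_snd \<or> md = 2 \<and> l = letter_fst then (md, a, b + 1)
     else (3, 0, 0))"

definition pair_accepts :: "(nat \<times> nat) set \<Rightarrow> nat \<times> nat \<times> nat \<Rightarrow> bool" where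
  "pair_accepts E s = (case s of (md, a, b) \<Rightarrow>
     md = 0 \<and> (a, a) \<in> E \<or> md = 1 \<and> (a, a + b) \<in> E \<or> md = 2 \<and> (a + b, a) \<in> E)"

definition pair_run_shape :: "unit option list list \<Rightarrow> nat \<times> nat \<times> nat \<Rightarrow> bool" where
  "pair_run_shape w s = (case s of (md, a, b) \<Rightarrow>
     md = 0 \<and> b = 0 \<and> w = replicate a letter_both \<or>
     md = 1 \<and> 0 < b \<and> w = replicate a letter_both @ replicate b letter_snd \<or>
     md = 2 \<and> 0 < b \<and> w = replicate a letter_both @ replicate b letter_fst \<or> md = 3)"

lemma pair_run_shape_step: "pair_run_shape w s \<Longrightarrow> pair_run_shape (w @ [l]) (pair_step s l)"
  by (cases s) (auto simp: pair_run_shape_def pair_step_def replicate_append_same)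

lemma pair_run_shape_foldl: "pair_run_shape w (foldl pair_step (0, 0, 0) w)"
proof (induction w rule: rev_induct)
  case Nil
  then show ?case by (simp add: pair_run_shape_def)
next
  case (snoc l w)
  then show ?case by (simp add: pair_run_shape_step)
qed

lemma foldl_pair_step_replicate:
  "foldl pair_step (0, a, 0) (replicate k letter_both) = (0, a + k, 0)"
  "md = 1 \<and> l = letter_snd \<or> md = 2 \<and> l = letter_fst \<Longrightarrow>
     foldl pair_step (md, a, b) (replicate k l) = (md, a, b + k)"
  by (induction k arbitrary: a b) (auto simp: pair_step_def)

lemma pair_accepts_conv_unary:
  "pair_accepts E (foldl pair_step (0, 0, 0) (conv_unary m n)) \<longleftrightarrow> (m, n) \<in> E"
proof -
  consider "m = n" | k where "n = m + Suc k" | k where "m = n + Suc k"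
    by (cases m n rule: linorder_cases) (auto dest: less_imp_Suc_add)
  then show ?thesis
    by cases (simp_all add: conv_unary_eq foldl_pair_step_replicate pair_accepts_def pair_step_def)
qed

lemma conv_unary_lang_eq_accepted:
  "conv_unary_lang E = {w. pair_accepts E (foldl pair_step (0, 0, 0) w)}"
proof (intro equalityI subsetI; clarify)
  fix w assume acc: "pair_accepts E (foldl pair_step (0, 0, 0) w)"
  obtain md a b where s: "foldl pair_step (0, 0, 0) w = (md, a, b)"
    by (metis prod_cases3)
  have "w = conv_unary a a \<or> w = conv_unary a (a + b) \<or> w = conv_unary (a + b) a"
    using pair_run_shape_foldl[of w] acc s
    by (auto simp: pair_run_shape_def pair_accepts_def conv_unary_eq)
  then show "w \<in> conv_unary_lang E"
    using acc by (elim disjE) (simp_all add: pair_accepts_conv_unary)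
qed (auto simp: conv_unary_lang_def pair_accepts_conv_unary)

definition canon_state :: "nat \<Rightarrow> nat \<Rightarrow> nat \<times> nat \<times> nat \<Rightarrow> nat \<times> nat \<times> nat" where
  "canon_state T P s = (case s of (md, a, b) \<Rightarrow> (md, canon T P a, canon T P b))"

lemma foldl_canon_state_pair_step:
  assumes "0 < P"
  shows "foldl (\<lambda>s l. canon_state T P (pair_step s l)) (canon_state T P s) w
           = canon_state T P (foldl pair_step s w)"
proof -
  have "canon_state T P (pair_step (canon_state T P s) l) = canon_state T P (pair_step s l)" for s l
    using canon_Suc[OF assms] canon_idem[OF assms]
    by (cases s) (auto simp: canon_state_def pair_step_def)
  then show ?thesis
    by (induction w arbitrary: s) simp_all
qed

lemma ult_periodic_pair_accepts_canon_state:
  "ult_periodic T P E \<Longrightarrow> pair_accepts E (canon_state T P s) = pair_accepts E s"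
  using ult_periodic_canon_above[of T P E] ult_periodic_canon_below[of T P E]
    ult_periodic_canon_above[of T P E _ 0]
  by (cases s) (auto simp: canon_state_def pair_accepts_def)

lemma ult_periodic_imp_regular:
  assumes E: "ult_periodic T P E"
  shows "regular (conv_unary_lang E)"
proof -
  have P: "0 < P"
    using E by (simp add: ult_periodic_def)
  have init: "canon_state T P (0, 0, 0) = (0, 0, 0)"
    by (simp add: canon_state_def)
  have "foldl (\<lambda>s l. canon_state T P (pair_step s l)) (0, 0, 0) w
          = canon_state T P (foldl pair_step (0, 0, 0) w)" for w
    using foldl_canon_state_pair_step[OF P, where T = T and s = "(0, 0, 0)" and w = w]
    unfolding init .
  then have "conv_unary_lang E
      = {w. foldl (\<lambda>s l. canon_state T P (pair_step s l)) (0, 0, 0) w \<in> {s. pair_accepts E s}}"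
    by (simp add: conv_unary_lang_eq_accepted ult_periodic_pair_accepts_canon_state[OF E])
  also have "regular \<dots>"
    by (rule regularI[where Q = "{..3} \<times> {..<T + P} \<times> {..<T + P}"])
      (use P in \<open>auto simp: canon_state_def pair_step_def canon_lt split: prod.splits\<close>)
  finally show ?thesis .
qed

lemma path_rtrancl_restrict:
  assumes path: "\<forall>i<n. (f i, f (Suc i)) \<in> E" and "a \<le> b" "b \<le> n"
    and V: "\<forall>i. a \<le> i \<and> i \<le> b \<longrightarrow> f i \<in> V"
  shows "(f a, f b) \<in> (E \<inter> V \<times> V)\<^sup>*"
  using \<open>a \<le> b\<close> \<open>b \<le> n\<close> V
proof (induction b rule: dec_induct)
  case (step b)
  then have "(f b, f (Suc b)) \<in> E \<inter> V \<times> V"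
    using path by auto
  with step show ?case
    by (auto intro: rtrancl_into_rtrancl)
qed simp

definition last_le :: "(nat \<Rightarrow> nat) \<Rightarrow> nat \<Rightarrow> nat \<Rightarrow> nat" where
  "last_le f n l = (GREATEST k. k \<le> n \<and> f k \<le> l)"

lemma
  fixes f :: "nat \<Rightarrow> nat"
  assumes "f 0 \<le> l" "l < f n"
  shows last_le_less: "last_le f n l < n"
    and last_le_le: "f (last_le f n l) \<le> l"
    and less_after_last_le: "last_le f n l < m \<Longrightarrow> m \<le> n \<Longrightarrow> l < f m"
proof -
  have k: "last_le f n l \<le> n \<and> f (last_le f n l) \<le> l"
    unfolding last_le_def by (rule GreatestI_nat[of _ 0]) (use assms in auto)
  then show "f (last_le f n l) \<le> l"
    by simp
  show "last_le f n l < n"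
    using k assms(2) by (cases "last_le f n l = n") auto
  show "l < f m" if "last_le f n l < m" "m \<le> n"
    using Greatest_le_nat[of "\<lambda>k. k \<le> n \<and> f k \<le> l" m n] that by (force simp: last_le_def)
qed

lemma last_le_mono:
  fixes f :: "nat \<Rightarrow> nat"
  assumes "f 0 \<le> l" "l \<le> l'"
  shows "last_le f n l \<le> last_le f n l'"
proof -
  have "last_le f n l \<le> n \<and> f (last_le f n l) \<le> l"
    unfolding last_le_def by (rule GreatestI_nat[of _ 0]) (use assms in auto)
  then show ?thesis
    unfolding last_le_def[of f n l'] using assms(2)
    by (intro Greatest_le_nat[where b = n]) auto
qed

lemma path_last_crossings:
  fixes f L :: "nat \<Rightarrow> nat"
  assumes "mono L" and crossing: "\<forall>i\<le>N. f 0 \<le> L i \<and> L i < f n"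
  obtains k where "\<And>i. i \<le> N \<Longrightarrow> k i < n" and "\<And>i. i \<le> N \<Longrightarrow> f (k i) \<le> L i"
    and "\<And>i m. i \<le> N \<Longrightarrow> k i < m \<Longrightarrow> m \<le> n \<Longrightarrow> L i < f m"
    and "\<And>i j. i \<le> j \<Longrightarrow> j \<le> N \<Longrightarrow> k i \<le> k j"
proof
  show "last_le f n (L i) < n" "f (last_le f n (L i)) \<le> L i" if "i \<le> N" for i
    using last_le_less last_le_le crossing that by blast+
  show "L i < f m" if "i \<le> N" "last_le f n (L i) < m" "m \<le> n" for i m
    using less_after_last_le crossing that by blast
  show "last_le f n (L i) \<le> last_le f n (L j)" if "i \<le> j" "j \<le> N" for i j
    using crossing \<open>mono L\<close> that by (intro last_le_mono) (auto dest: monoD)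
qed

lemma pigeonhole_mod:
  fixes g :: "nat \<Rightarrow> nat"
  assumes "0 < P"
  shows "\<exists>i j. i < j \<and> j \<le> P \<and> g i mod P = g j mod P"
proof -
  define h where "h i = g i mod P" for i
  have "\<not> inj_on h {..P}"
  proof
    assume "inj_on h {..P}"
    then have "card (h ` {..P}) = P + 1"
      by (simp add: card_image)
    moreover have "h ` {..P} \<subseteq> {..<P}"
      using assms by (auto simp: h_def)
    then have "card (h ` {..P}) \<le> P"
      using card_mono[of "{..<P}"] by fastforce
    ultimately show False
      by simp
  qed
  then obtain i j where ij: "i \<le> P" "j \<le> P" "i \<noteq> j" "h i = h j"
    unfolding inj_on_def by auto
  show ?thesis
  proof (cases "i < j")
    case True
    with ij show ?thesis by (auto simp: h_def)
  next
    case False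
    with ij show ?thesis by (intro exI[of _ j] exI[of _ i]) (auto simp: h_def)
  qed
qed

definition rel_above :: "nat \<Rightarrow> (nat \<times> nat) set \<Rightarrow> (nat \<times> nat) set" where
  "rel_above T E = E \<inter> {T..} \<times> {T..}"

lemma rtrancl_rel_above_subset: "(rel_above T E)\<^sup>* \<subseteq> E\<^sup>*"
  by (rule rtrancl_mono) (auto simp: rel_above_def)

lemma ult_periodic_rtrancl_rel_above_shift:
  assumes E: "ult_periodic T P E" and "(p, q) \<in> (rel_above T E)\<^sup>*" and "P dvd s"
  shows "(p + s, q + s) \<in> (rel_above T E)\<^sup>*"
  using \<open>(p, q) \<in> (rel_above T E)\<^sup>*\<close>
proof (induction rule: rtrancl_induct)
  case (step y z)
  obtain c where s: "s = c * P"
    using \<open>P dvd s\<close> by (auto simp: dvd_def mult.commute)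
  have "(y + s, z + s) \<in> rel_above T E"
    using step(2) ult_periodic_shift_diag[OF E, of y z c] by (auto simp: rel_above_def s)
  with step.IH show ?case
    by (rule rtrancl_into_rtrancl)
qed simp

lemma ult_periodic_path_pump_long_edge:
  assumes E: "ult_periodic T P E" and path: "\<forall>i<n. (f i, f (Suc i)) \<in> E"
    and "k < n" and long: "f k + T \<le> f (Suc k)"
    and above: "\<And>m. k < m \<Longrightarrow> m \<le> n \<Longrightarrow> T \<le> f m"
  shows "(f 0, f n + c * P) \<in> E\<^sup>+"
proof -
  have "(f 0, f k) \<in> E\<^sup>*"
    using path_rtrancl_restrict[OF path, of 0 k UNIV] \<open>k < n\<close> by simp
  moreover have "(f k, f (Suc k) + c * P) \<in> E"
    using ult_periodic_shift_right[OF E long, of c] path \<open>k < n\<close> by simp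
  ultimately have "(f 0, f (Suc k) + c * P) \<in> E\<^sup>+"
    by (rule rtrancl_into_trancl1)
  moreover have "(f (Suc k), f n) \<in> (rel_above T E)\<^sup>*"
    using path_rtrancl_restrict[OF path, of "Suc k" n "{T..}"] \<open>k < n\<close> above
    by (simp add: rel_above_def)
  then have "(f (Suc k) + c * P, f n + c * P) \<in> (rel_above T E)\<^sup>*"
    using ult_periodic_rtrancl_rel_above_shift[OF E _ dvd_triv_right] by blast
  then have "(f (Suc k) + c * P, f n + c * P) \<in> E\<^sup>*"
    using rtrancl_rel_above_subset by blast
  ultimately show ?thesis
    by (rule trancl_rtrancl_trancl)
qed

lemma ult_periodic_path_pump_loop:
  assumes E: "ult_periodic T P E" and path: "\<forall>i<n. (f i, f (Suc i)) \<in> E"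
    and ab: "a < b" "b \<le> n" and "f a \<le> f b" "f 0 < f n" "P dvd d" and d: "d = f b - f a"
    and above: "\<And>m. a \<le> m \<Longrightarrow> m \<le> n \<Longrightarrow> T \<le> f m"
  shows "(f 0, f n + c * d) \<in> E\<^sup>+"
proof -
  have seg: "(f i, f j) \<in> (rel_above T E)\<^sup>*" if "a \<le> i" "i \<le> j" "j \<le> n" for i j
    using path_rtrancl_restrict[OF path that(2,3), of "{T..}"] above that
    by (simp add: rel_above_def)
  have loop: "(f a, f a + d) \<in> (rel_above T E)\<^sup>*"
    using seg[of a b] ab \<open>f a \<le> f b\<close> d by simp
  have dvd: "P dvd k * d" for k
    using \<open>P dvd d\<close> by simp
  have loops: "(f a, f a + k * d) \<in> (rel_above T E)\<^sup>*" for k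
  proof (induction k)
    case (Suc k)
    have "(f a + k * d, f a + d + k * d) \<in> (rel_above T E)\<^sup>*"
      using ult_periodic_rtrancl_rel_above_shift[OF E loop dvd] .
    with Suc.IH show ?case
      by (simp add: add_ac)
  qed simp
  have "(f b + c * d, f n + c * d) \<in> (rel_above T E)\<^sup>*"
    using ult_periodic_rtrancl_rel_above_shift[OF E seg[of b n] dvd] ab by simp
  then have "(f a, f n + c * d) \<in> (rel_above T E)\<^sup>*"
    using loops[of "Suc c"] \<open>f a \<le> f b\<close> d by (simp add: add_ac)
  moreover have "(f 0, f a) \<in> E\<^sup>*"
    using path_rtrancl_restrict[OF path, of 0 a UNIV] ab by simp
  ultimately have "(f 0, f n + c * d) \<in> E\<^sup>*"
    using rtrancl_rel_above_subset by (blast intro: rtrancl_trans)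
  moreover have "f 0 \<noteq> f n + c * d"
    using \<open>f 0 < f n\<close> by simp
  ultimately show ?thesis
    by (simp add: rtrancl_eq_or_trancl)
qed

lemma ult_periodic_trancl_pump:
  assumes E: "ult_periodic T P E" and far: "x + 2 * T + P * T < y" and "(x, y) \<in> E\<^sup>+"
  shows "\<exists>d. 0 < d \<and> d \<le> (P + 1) * (T + 1) \<and> (\<forall>c. (x, y + c * d) \<in> E\<^sup>+)"
proof -
  have P: "0 < P"
    using E by (simp add: ult_periodic_def)
  obtain n f where f0: "f 0 = x" and fn: "f n = y" and path: "\<forall>i<n. (f i, f (Suc i)) \<in> E"
    using \<open>(x, y) \<in> E\<^sup>+\<close> by (auto simp: trancl_power relpow_fun_conv)
  define L where "L i = x + 2 * T + i * T" for i
  have L_step: "L i + T \<le> L j" if "i < j" for i j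
    using mult_le_mono1[of "Suc i" j T] that by (simp add: L_def)
  have "mono L"
    by (auto simp: L_def mono_def)
  moreover have "\<forall>i\<le>P. f 0 \<le> L i \<and> L i < f n"
  proof (intro allI impI)
    fix i assume "i \<le> P"
    then have "i * T \<le> P * T"
      by (rule mult_le_mono1)
    then show "f 0 \<le> L i \<and> L i < f n"
      using far f0 fn unfolding L_def by linarith
  qed
  ultimately obtain k where k_lt: "\<And>i. i \<le> P \<Longrightarrow> k i < n"
    and k_below: "\<And>i. i \<le> P \<Longrightarrow> f (k i) \<le> L i"
    and k_after: "\<And>i m. i \<le> P \<Longrightarrow> k i < m \<Longrightarrow> m \<le> n \<Longrightarrow> L i < f m"
    and k_mono: "\<And>i j. i \<le> j \<Longrightarrow> j \<le> P \<Longrightarrow> k i \<le> k j"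
    by (rule path_last_crossings) (rule that)
  show ?thesis
  proof (cases "\<exists>i\<le>P. f (k i) + T \<le> f (Suc (k i))")
    case True
    then obtain i where i: "i \<le> P" and long: "f (k i) + T \<le> f (Suc (k i))"
      by blast
    have "T \<le> f m" if "k i < m" "m \<le> n" for m
      using k_after[OF i that] by (simp add: L_def)
    then have "(f 0, f n + c * P) \<in> E\<^sup>+" for c
      using ult_periodic_path_pump_long_edge[OF E path k_lt[OF i] long] by blast
    then show ?thesis
      using P f0 fn by (intro exI[of _ P]) simp
  next
    case False
    then have near: "L i < f (k i) + T" if "i \<le> P" for i
      using k_after[OF that, of "Suc (k i)"] k_lt[OF that] that by force
    obtain i j where ij: "i < j" "j \<le> P" "f (k i) mod P = f (k j) mod P"
      using pigeonhole_mod[OF P, of "\<lambda>i. f (k i)"] by blast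
    then have i: "i \<le> P"
      by simp
    have lt: "f (k i) < f (k j)"
      using k_below[OF i] near[OF ij(2)] L_step[OF ij(1)] by linarith
    with k_mono[of i j] ij have "k i < k j"
      by (cases "k i = k j") auto
    define d where "d = f (k j) - f (k i)"
    have "P dvd d"
      using mod_eq_dvd_iff_nat[of "f (k i)" "f (k j)" P] ij(3) lt unfolding d_def by simp
    moreover have "T \<le> f m" if "k i \<le> m" "m \<le> n" for m
    proof (cases "m = k i")
      case True
      then show ?thesis
        using near[OF i] by (simp add: L_def)
    next
      case False
      then show ?thesis
        using k_after[OF i, of m] that by (simp add: L_def)
    qed
    moreover have "k j \<le> n" "f 0 < f n"
      using k_lt[OF ij(2)] far f0 fn by simp_all
    ultimately have "(f 0, f n + c * d) \<in> E\<^sup>+" for c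
      using ult_periodic_path_pump_loop[OF E path \<open>k i < k j\<close>] lt d_def by simp
    then have "(x, y + c * d) \<in> E\<^sup>+" for c
      using f0 fn by simp
    moreover have "d \<le> (P + 1) * (T + 1)"
    proof -
      have "d < L j - L i + T"
        using k_below[OF ij(2)] near[OF i] L_step[OF ij(1)] lt unfolding d_def by linarith
      also have "L j - L i + T = (j - i + 1) * T"
        using ij(1) by (simp add: L_def algebra_simps diff_mult_distrib)
      also have "\<dots> \<le> (P + 1) * (T + 1)"
        using ij by (intro mult_le_mono) auto
      finally show ?thesis
        by simp
    qed
    moreover have "0 < d"
      using lt by (simp add: d_def)
    ultimately show ?thesis
      by blast
  qed
qed

lemma ult_periodic_trancl_pump_right:
  assumes E: "ult_periodic T P E"
  shows "\<exists>K Q. 0 < Q \<and> (\<forall>x y c. x + K \<le> y \<longrightarrow> (x, y) \<in> E\<^sup>+ \<longrightarrow> (x, y + c * Q) \<in> E\<^sup>+)"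
proof -
  define B where "B = (P + 1) * (T + 1)"
  have "(x, y + c * fact B) \<in> E\<^sup>+"
    if far: "x + (2 * T + P * T + 1) \<le> y" and xy: "(x, y) \<in> E\<^sup>+" for x y c
  proof -
    obtain d where d: "0 < d" "d \<le> B" "\<forall>c. (x, y + c * d) \<in> E\<^sup>+"
      using ult_periodic_trancl_pump[OF E _ xy] far unfolding B_def by fastforce
    have "d dvd fact B"
      using d by (intro dvd_fact) auto
    then obtain q where "fact B = q * d"
      by (auto simp: dvd_def mult.commute)
    then show ?thesis
      using d(3) by (metis mult.assoc)
  qed
  then show ?thesis
    by (intro exI[of _ "2 * T + P * T + 1"] exI[of _ "fact B"]) auto
qed

lemma ult_periodic_converse: "ult_periodic T P E \<Longrightarrow> ult_periodic T P (E\<inverse>)"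
  unfolding ult_periodic_def converse_iff by blast

lemma ult_periodic_trancl_pump_left:
  assumes "ult_periodic T P E"
  shows "\<exists>K Q. 0 < Q \<and> (\<forall>x y c. y + K \<le> x \<longrightarrow> (x, y) \<in> E\<^sup>+ \<longrightarrow> (x + c * Q, y) \<in> E\<^sup>+)"
  using ult_periodic_trancl_pump_right[OF ult_periodic_converse[OF assms]]
  by (simp add: trancl_converse) blast

lemma ult_periodic_trancl_shift_or_dip:
  assumes E: "ult_periodic T P E" and "(x, y) \<in> E\<^sup>+" "T \<le> x" "T \<le> y"
  shows "(x + c * P, y + c * P) \<in> E\<^sup>+ \<or> (\<exists>z<T. (x, z) \<in> E\<^sup>+ \<and> (z, y) \<in> E\<^sup>+)"
  using \<open>(x, y) \<in> E\<^sup>+\<close> \<open>T \<le> y\<close>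
proof (induction rule: trancl_induct)
  case (base y)
  then show ?case
    using ult_periodic_shift_diag[OF E \<open>T \<le> x\<close>, of y c] by auto
next
  case (step y z)
  show ?case
  proof (cases "T \<le> y")
    case False
    then show ?thesis
      using step(1,2) by (intro disjI2 exI[of _ y]) auto
  next
    case True
    have "(y + c * P, z + c * P) \<in> E"
      using ult_periodic_shift_diag[OF E True step.prems, of c] step(2) by simp
    with step.IH[OF True] show ?thesis
      using step(2) by (blast intro: trancl_into_trancl)
  qed
qed

lemma ult_periodic_trancl_pumps:
  assumes E: "ult_periodic T P E"
  obtains Q K A where "0 < Q"
    and "\<And>x y. x + K \<le> y \<Longrightarrow> (x, y) \<in> E\<^sup>+ \<Longrightarrow> (x, y + Q) \<in> E\<^sup>+"
    and "\<And>x y. y + K \<le> x \<Longrightarrow> (x, y) \<in> E\<^sup>+ \<Longrightarrow> (x + Q, y) \<in> E\<^sup>+"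
    and "\<And>x y. A \<le> x \<Longrightarrow> A \<le> y \<Longrightarrow> (x, y) \<in> E\<^sup>+ \<Longrightarrow> (x + Q, y + Q) \<in> E\<^sup>+"
proof -
  have P: "0 < P"
    using E by (simp add: ult_periodic_def)
  obtain K1 Q1 where Q1: "0 < Q1"
    and right: "\<And>x y c. x + K1 \<le> y \<Longrightarrow> (x, y) \<in> E\<^sup>+ \<Longrightarrow> (x, y + c * Q1) \<in> E\<^sup>+"
    using ult_periodic_trancl_pump_right[OF E] by blast
  obtain K2 Q2 where Q2: "0 < Q2"
    and left: "\<And>x y c. y + K2 \<le> x \<Longrightarrow> (x, y) \<in> E\<^sup>+ \<Longrightarrow> (x + c * Q2, y) \<in> E\<^sup>+"
    using ult_periodic_trancl_pump_left[OF E] by blast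
  define Q where "Q = Q1 * Q2 * P"
  have right': "(x, y + Q) \<in> E\<^sup>+" if "x + K1 \<le> y" "(x, y) \<in> E\<^sup>+" for x y
    using right[OF that, of "Q2 * P"] by (simp add: Q_def ac_simps)
  have left': "(x + Q, y) \<in> E\<^sup>+" if "y + K2 \<le> x" "(x, y) \<in> E\<^sup>+" for x y
    using left[OF that, of "Q1 * P"] by (simp add: Q_def ac_simps)
  have diag: "(x + Q, y + Q) \<in> E\<^sup>+"
    if high: "T + K1 + K2 \<le> x" "T + K1 + K2 \<le> y" and xy: "(x, y) \<in> E\<^sup>+" for x y
  proof -
    have "T \<le> x" "T \<le> y"
      using high by simp_all
    then consider "(x + Q, y + Q) \<in> E\<^sup>+" | z where "z < T" "(x, z) \<in> E\<^sup>+" "(z, y) \<in> E\<^sup>+"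
      using ult_periodic_trancl_shift_or_dip[OF E xy, of "Q1 * Q2"] by (auto simp: Q_def mult.assoc)
    then show ?thesis
    proof cases
      case 2
      then have "(x + Q, z) \<in> E\<^sup>+" "(z, y + Q) \<in> E\<^sup>+"
        using left' right' high by simp_all
      then show ?thesis
        by (rule trancl_trans)
    qed
  qed
  show ?thesis
    using Q1 Q2 P right' left' diag
    by (intro that[of Q "K1 + K2" "T + K1 + K2"]) (simp_all add: Q_def)
qed

lemma monotone_bool_eventually_stable:
  fixes f :: "nat \<Rightarrow> bool"
  assumes "\<And>n. f n \<Longrightarrow> f (Suc n)"
  shows "\<forall>\<^sub>F n in sequentially. f (Suc n) = f n"
proof (cases "\<exists>m. f m")
  case True
  then obtain m where "f m"
    by blast
  have "f n" if "m \<le> n" for n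
    using lift_Suc_mono_le[of f m n] assms \<open>f m\<close> that by (auto simp: le_fun_def)
  then show ?thesis
    unfolding eventually_sequentially by (intro exI[of _ m]) auto
qed simp

lemma monotone2_eventually_stable:
  fixes h :: "nat \<Rightarrow> nat \<Rightarrow> bool"
  assumes mono_a: "\<And>a b. h a b \<Longrightarrow> h (Suc a) b" and mono_b: "\<And>a b. h a b \<Longrightarrow> h a (Suc b)"
  shows "\<forall>\<^sub>F n in sequentially. (\<forall>b. h (Suc n) b = h n b) \<and> (\<forall>a. h a (Suc n) = h a n)"
proof (cases "\<exists>a b. h a b")
  case True
  define b0 where "b0 = (LEAST b. \<exists>a. h a b)"
  obtain a0 where "h a0 b0"
    using LeastI_ex[of "\<lambda>b. \<exists>a. h a b"] True unfolding b0_def by blast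
  have "h a b" if "h a' b'" "a' \<le> a" "b' \<le> b" for a b a' b'
  proof -
    have "h a b'"
      using lift_Suc_mono_le[of "\<lambda>a. h a b'" a' a] mono_a that by (auto simp: le_fun_def)
    then show ?thesis
      using lift_Suc_mono_le[of "h a" b' b] mono_b that by (auto simp: le_fun_def)
  qed
  then have row: "h a b \<longleftrightarrow> b0 \<le> b" if "a0 \<le> a" for a b
    using \<open>h a0 b0\<close> that Least_le[of "\<lambda>b. \<exists>a. h a b"] unfolding b0_def by blast
  have "\<forall>\<^sub>F n in sequentially. \<forall>b. h (Suc n) b = h n b"
    unfolding eventually_sequentially using row by (intro exI[of _ a0]) simp
  moreover have "\<forall>\<^sub>F n in sequentially. \<forall>a\<in>{..a0}. h a (Suc n) = h a n"
    using monotone_bool_eventually_stable[of "h _"] mono_b by (intro eventually_ball_finite) auto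
  then have "\<forall>\<^sub>F n in sequentially. \<forall>a. h a (Suc n) = h a n"
    using eventually_ge_at_top[of b0]
  proof eventually_elim
    case (elim n)
    show ?case
    proof
      fix a
      show "h a (Suc n) = h a n"
        using elim row[of a n] row[of a "Suc n"] by (cases "a \<le> a0") auto
    qed
  qed
  ultimately show ?thesis
    by (rule eventually_conj)
qed simp

text \<open>\<open>grid_pred R A K Q x0 k0 a b\<close> says \<open>(x, x + k) \<in> R\<close> for \<open>x = x0 + a * Q\<close> and
  \<open>k = k0 + b * Q\<close>, where the multiples of Q are only added above the thresholds A resp. K,
  the range in which the one-way pumping makes it monotone in a and b.\<close>

definition grid_pred ::
  "(nat \<times> nat) set \<Rightarrow> nat \<Rightarrow> nat \<Rightarrow> nat \<Rightarrow> nat \<Rightarrow> nat \<Rightarrow> nat \<Rightarrow> nat \<Rightarrow> bool" where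
  "grid_pred R A K Q x0 k0 a b \<longleftrightarrow>
     (x0 + (if A \<le> x0 then a else 0) * Q,
      x0 + (if A \<le> x0 then a else 0) * Q + k0 + (if K \<le> k0 then b else 0) * Q) \<in> R"

lemma mem_iff_grid_pred:
  "(x, x + k) \<in> R \<longleftrightarrow>
     grid_pred R A K Q (canon A Q x) (canon K Q k) (canon_quot A Q x) (canon_quot K Q k)"
  using canon_decomp_if[of A Q x] canon_decomp_if[of K Q k]
  by (simp add: grid_pred_def add.assoc)

lemma grid_pred_Suc_fst:
  assumes "A \<le> canon A Q x"
  shows "grid_pred R A K Q (canon A Q x) (canon K Q k) (Suc (canon_quot A Q x)) (canon_quot K Q k)
           \<longleftrightarrow> (x + Q, x + k + Q) \<in> R"
  using canon_decomp_if[of A Q x] canon_decomp_if[of K Q k] assms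
  by (simp add: grid_pred_def algebra_simps)

lemma grid_pred_Suc_snd:
  assumes "K \<le> canon K Q k"
  shows "grid_pred R A K Q (canon A Q x) (canon K Q k) (canon_quot A Q x) (Suc (canon_quot K Q k))
           \<longleftrightarrow> (x, x + k + Q) \<in> R"
  using canon_decomp_if[of A Q x] canon_decomp_if[of K Q k] assms
  by (simp add: grid_pred_def algebra_simps)

lemma grid_pred_eventually_stable:
  fixes R :: "(nat \<times> nat) set"
  assumes right: "\<And>x y. x + K \<le> y \<Longrightarrow> (x, y) \<in> R \<Longrightarrow> (x, y + Q) \<in> R"
    and diag: "\<And>x y. A \<le> x \<Longrightarrow> A \<le> y \<Longrightarrow> (x, y) \<in> R \<Longrightarrow> (x + Q, y + Q) \<in> R"
  shows "\<forall>\<^sub>F n in sequentially.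
           (\<forall>b. grid_pred R A K Q x0 k0 (Suc n) b = grid_pred R A K Q x0 k0 n b) \<and>
           (\<forall>a. grid_pred R A K Q x0 k0 a (Suc n) = grid_pred R A K Q x0 k0 a n)"
proof (rule monotone2_eventually_stable)
  show "grid_pred R A K Q x0 k0 (Suc a) b" if "grid_pred R A K Q x0 k0 a b" for a b
  proof (cases "A \<le> x0")
    case True
    let ?x = "x0 + a * Q"
    have "(?x + Q, ?x + k0 + (if K \<le> k0 then b else 0) * Q + Q) \<in> R"
      using diag[of ?x] that True by (simp add: grid_pred_def)
    then show ?thesis
      using True by (simp add: grid_pred_def algebra_simps)
  qed (use that in \<open>simp add: grid_pred_def\<close>)
  show "grid_pred R A K Q x0 k0 a (Suc b)" if "grid_pred R A K Q x0 k0 a b" for a b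
  proof (cases "K \<le> k0")
    case True
    let ?x = "x0 + (if A \<le> x0 then a else 0) * Q"
    have "(?x, ?x + k0 + b * Q + Q) \<in> R"
      using right[of ?x] that True by (simp add: grid_pred_def)
    then show ?thesis
      using True by (simp add: grid_pred_def algebra_simps)
  qed (use that in \<open>simp add: grid_pred_def\<close>)
qed

lemma pumps_imp_shift_iff:
  fixes R :: "(nat \<times> nat) set"
  assumes Q: "0 < Q"
    and right: "\<And>x y. x + K \<le> y \<Longrightarrow> (x, y) \<in> R \<Longrightarrow> (x, y + Q) \<in> R"
    and diag: "\<And>x y. A \<le> x \<Longrightarrow> A \<le> y \<Longrightarrow> (x, y) \<in> R \<Longrightarrow> (x + Q, y + Q) \<in> R"
  obtains T where "\<And>x y. T \<le> x \<Longrightarrow> x \<le> y \<Longrightarrow> (x, y) \<in> R \<longleftrightarrow> (x + Q, y + Q) \<in> R"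
    and "\<And>x y. x + T \<le> y \<Longrightarrow> (x, y) \<in> R \<longleftrightarrow> (x, y + Q) \<in> R"
proof -
  let ?H = "grid_pred R A K Q"
  have "\<forall>\<^sub>F n in sequentially. \<forall>x0\<in>{..<A + Q}. \<forall>k0\<in>{..<K + Q}.
          (\<forall>b. ?H x0 k0 (Suc n) b = ?H x0 k0 n b) \<and> (\<forall>a. ?H x0 k0 a (Suc n) = ?H x0 k0 a n)"
    using grid_pred_eventually_stable[OF right diag]
    by (intro eventually_ball_finite ballI finite_lessThan)
  then obtain N where N: "\<And>x0 k0 n. x0 < A + Q \<Longrightarrow> k0 < K + Q \<Longrightarrow> N \<le> n \<Longrightarrow>
      (\<forall>b. ?H x0 k0 (Suc n) b = ?H x0 k0 n b) \<and> (\<forall>a. ?H x0 k0 a (Suc n) = ?H x0 k0 a n)"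
    unfolding eventually_sequentially by fastforce
  have canon_less: "canon A Q x < A + Q" "canon K Q k < K + Q" for x k
    using canon_lt[OF Q] by auto
  have diag_iff: "(x, x + k) \<in> R \<longleftrightarrow> (x + Q, x + k + Q) \<in> R" if "A + K + N * Q \<le> x" for x k
  proof -
    have "A \<le> canon A Q x" "N \<le> canon_quot A Q x"
      using that canon_ge[of A x Q] canon_quot_ge[OF Q, of A N x] by auto
    then show ?thesis
      using N[OF canon_less(1)[of x] canon_less(2)[of k], of "canon_quot A Q x"]
        mem_iff_grid_pred[of x k R A K Q] grid_pred_Suc_fst[of A Q x R K k] by simp
  qed
  have right_iff: "(x, x + k) \<in> R \<longleftrightarrow> (x, x + k + Q) \<in> R" if "A + K + N * Q \<le> k" for x k
  proof -
    have "K \<le> canon K Q k" "N \<le> canon_quot K Q k"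
      using that canon_ge[of K k Q] canon_quot_ge[OF Q, of K N k] by auto
    then show ?thesis
      using N[OF canon_less(1)[of x] canon_less(2)[of k], of "canon_quot K Q k"]
        mem_iff_grid_pred[of x k R A K Q] grid_pred_Suc_snd[of K Q k R A x] by simp
  qed
  show ?thesis
  proof (rule that[of "A + K + N * Q"])
    fix x y assume "A + K + N * Q \<le> x" "x \<le> y"
    then show "(x, y) \<in> R \<longleftrightarrow> (x + Q, y + Q) \<in> R"
      using diag_iff[of x "y - x"] by simp
  next
    fix x y assume "x + (A + K + N * Q) \<le> y"
    then show "(x, y) \<in> R \<longleftrightarrow> (x, y + Q) \<in> R"
      using right_iff[of "y - x" x] by simp
  qed
qed

lemma ult_periodic_trancl:
  assumes "ult_periodic T P E"
  shows "\<exists>T' Q. ult_periodic T' Q (E\<^sup>+)"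
proof -
  obtain Q K A where Q: "0 < Q"
    and right: "\<And>x y. x + K \<le> y \<Longrightarrow> (x, y) \<in> E\<^sup>+ \<Longrightarrow> (x, y + Q) \<in> E\<^sup>+"
    and left: "\<And>x y. y + K \<le> x \<Longrightarrow> (x, y) \<in> E\<^sup>+ \<Longrightarrow> (x + Q, y) \<in> E\<^sup>+"
    and diag: "\<And>x y. A \<le> x \<Longrightarrow> A \<le> y \<Longrightarrow> (x, y) \<in> E\<^sup>+ \<Longrightarrow> (x + Q, y + Q) \<in> E\<^sup>+"
    by (rule ult_periodic_trancl_pumps[OF assms]) (rule that)
  obtain T1 where T1_diag: "\<And>x y. T1 \<le> x \<Longrightarrow> x \<le> y \<Longrightarrow> (x, y) \<in> E\<^sup>+ \<longleftrightarrow> (x + Q, y + Q) \<in> E\<^sup>+"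
    and T1_right: "\<And>x y. x + T1 \<le> y \<Longrightarrow> (x, y) \<in> E\<^sup>+ \<longleftrightarrow> (x, y + Q) \<in> E\<^sup>+"
    using pumps_imp_shift_iff[OF Q right diag] by blast
  have right': "(x, y + Q) \<in> (E\<^sup>+)\<inverse>" if "x + K \<le> y" "(x, y) \<in> (E\<^sup>+)\<inverse>" for x y
    using left that by simp
  have diag': "(x + Q, y + Q) \<in> (E\<^sup>+)\<inverse>" if "A \<le> x" "A \<le> y" "(x, y) \<in> (E\<^sup>+)\<inverse>" for x y
    using diag that by simp
  obtain T2 where T2_diag: "\<And>x y. T2 \<le> x \<Longrightarrow> x \<le> y \<Longrightarrow> (y, x) \<in> E\<^sup>+ \<longleftrightarrow> (y + Q, x + Q) \<in> E\<^sup>+"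
    and T2_left: "\<And>x y. x + T2 \<le> y \<Longrightarrow> (y, x) \<in> E\<^sup>+ \<longleftrightarrow> (y + Q, x) \<in> E\<^sup>+"
    using pumps_imp_shift_iff[OF Q right' diag'] unfolding converse_iff by blast
  have "ult_periodic (T1 + T2) Q (E\<^sup>+)"
    unfolding ult_periodic_def
  proof (intro conjI allI impI)
    fix x y assume xy: "T1 + T2 \<le> x" "T1 + T2 \<le> y"
    show "(x, y) \<in> E\<^sup>+ \<longleftrightarrow> (x + Q, y + Q) \<in> E\<^sup>+"
    proof (cases "x \<le> y")
      case True
      then show ?thesis
        using T1_diag[of x y] xy by simp
    next
      case False
      then show ?thesis
        using T2_diag[of y x] xy by simp
    qed
  next
    fix x y assume "x + (T1 + T2) \<le> y"
    then show "(x, y) \<in> E\<^sup>+ \<longleftrightarrow> (x, y + Q) \<in> E\<^sup>+"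
      using T1_right[of x y] by simp
  next
    fix x y assume "y + (T1 + T2) \<le> x"
    then show "(x, y) \<in> E\<^sup>+ \<longleftrightarrow> (x + Q, y) \<in> E\<^sup>+"
      using T2_left[of y x] by simp
  qed (rule Q)
  then show ?thesis
    by blast
qed

lemma unary_pullback_trancl_rel:
  fixes \<phi> :: "unit list \<Rightarrow> 'b"
  assumes R: "\<forall>xs\<in>R. set xs \<subseteq> range \<phi>"
  shows "unary_pullback \<phi> (trancl_rel R) = (unary_pullback \<phi> R)\<^sup>+"
proof -
  define \<psi> where "\<psi> m = \<phi> (replicate m ())" for m
  define R2 where "R2 = {(u, v). [u, v] \<in> R}"
  have pullback: "(m, n) \<in> unary_pullback \<phi> R \<longleftrightarrow> (\<psi> m, \<psi> n) \<in> R2" for m n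
    by (simp add: unary_pullback_def \<psi>_def R2_def)
  have "(\<psi> m, \<psi> n) \<in> R2\<^sup>+" if "(m, n) \<in> (unary_pullback \<phi> R)\<^sup>+" for m n
    using that by induction (auto simp: pullback intro: trancl_into_trancl)
  moreover have "(m, n) \<in> (unary_pullback \<phi> R)\<^sup>+" if "(\<psi> m, v) \<in> R2\<^sup>+" "v = \<psi> n" for m n v
    using that
  proof (induction arbitrary: n rule: trancl_induct)
    case (base v)
    then show ?case
      by (simp add: pullback r_into_trancl')
  next
    case (step u v)
    have "u \<in> range \<phi>"
      using step(2) R by (auto simp: R2_def)
    then obtain w where "u = \<phi> w"
      by blast
    then have u: "u = \<psi> (length w)"
      using unit_list_eq_replicate[of w] by (simp add: \<psi>_def)
    then have "(m, length w) \<in> (unary_pullback \<phi> R)\<^sup>+"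
      using step.IH by blast
    moreover have "(length w, n) \<in> unary_pullback \<phi> R"
      using step(2) step.prems u by (simp add: pullback)
    ultimately show ?case
      by (rule trancl_into_trancl)
  qed
  ultimately show ?thesis
    by (auto simp: unary_pullback_def trancl_rel_def R2_def \<psi>_def)
qed

theorem theorem4p6:
  fixes S :: "'b set" and Rs :: "(nat \<times> 'b list set) list"
    and \<phi> :: "unit list \<Rightarrow> 'b" and R :: "'b list set"
  assumes "rel_structure S Rs"
    and "injective_unary_fa_presentation S Rs \<phi>"
    and "(2, R) \<in> set Rs"
  shows "regular_rel (Lambda (UNIV :: unit list set) \<phi> 2 (trancl_rel R))
         \<and> unary_fa_presentable S (Rs @ [(2, trancl_rel R)])"
proof -
  \<comment> \<open>Injectivity of \<open>\<phi>\<close> is not needed: every entry of a tuple in R has some preimage,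
    and that is all it takes to pull paths of R back to paths on the naturals.\<close>
  have fa: "fa_presentation S Rs (UNIV :: unit list set) \<phi>"
    using assms(2) by (simp add: injective_unary_fa_presentation_def)
  then have "\<phi> ` UNIV = S"
    by (simp add: fa_presentation_def)
  then have R_range: "\<forall>xs\<in>R. set xs \<subseteq> range \<phi>"
    using assms(1,3) unfolding rel_structure_def by fastforce
  have "regular_rel (Lambda (UNIV :: unit list set) \<phi> 2 R)"
    using fa assms(3) unfolding fa_presentation_def by auto
  then have "regular (conv_unary_lang (unary_pullback \<phi> R))"
    by (simp add: regular_rel_def conv_Lambda_unary)
  then obtain T P where "ult_periodic T P (unary_pullback \<phi> R)"
    using regular_imp_ult_periodic by blast
  then obtain T' Q where "ult_periodic T' Q ((unary_pullback \<phi> R)\<^sup>+)"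
    using ult_periodic_trancl by blast
  then have new: "regular_rel (Lambda (UNIV :: unit list set) \<phi> 2 (trancl_rel R))"
    by (simp add: regular_rel_def conv_Lambda_unary unary_pullback_trancl_rel[OF R_range]
      ult_periodic_imp_regular)
  then have "fa_presentation S (Rs @ [(2, trancl_rel R)]) (UNIV :: unit list set) \<phi>"
    using fa unfolding fa_presentation_def by auto
  with new show ?thesis
    unfolding unary_fa_presentable_def by blast
qed

end
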